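(* Let $p$ be a program. Then $p$ is in $\to_{\mathrm{ond}}$-normal form (there is no $q$ with $p\to_{\mathrm{ond}} q$) if and only if $\mathrm{onorm}(p)$.
   Context: Syntax (split presentation). Terms: $t,u,s ::= x \mid \lambda x.t \mid t\,u$. Values: $v ::= \lambda x.t$ (variables are not values). Environments: $E ::= \epsilon \mid E[x\leftarrow t]$. Programs: $p ::= (t,E)$. In $E[x\leftarrow t]$ and $(u,E[x\leftarrow t])$ the variable $x$ is bound in $E$ and $u$; everything is up to $\alpha$-renaming, appended ES bind fresh variables. Appending: $(t,E)@[x\leftarrow u] := (t,E[x\leftarrow u])$. Inert terms and fireballs: $i ::= x \mid i\,f$, $f ::= v \mid i$. Open term evaluation contexts: $\mathcal{H} ::= \langle\cdot\rangle \mid \mathcal{H}\,t \mid i\,\mathcal{H}$. Term contexts: $C ::= \langle\cdot\rangle \mid C\,t \mid t\,C$. Environment contexts: $G ::= E[x\leftarrow C] \mid G[x\leftarrow u]$. Program contexts: $P ::= (C,E) \mid (t,G)$, with $(C,E)@[x\leftarrow u] := (C,E[x\leftarrow u])$, $(t,G)@[x\leftarrow u] := (t,G[x\leftarrow u])$. Plugging: $(C,E)\langle (t,E')\rangle := (C\langle t\rangle, E'E)$; $(u,E[x\leftarrow C])\langle (t,E')\rangle := (u, E[x\leftarrow C\langle t\rangle]E')$; $(u,G[x\leftarrow s])\langle (t,E)\rangle := ((u,G)\langle(t,E)\rangle)@[x\leftarrow s]$; $P\langle t\rangle := P\langle (t,\epsilon)\rangle$. For $p=(t,E)$, $p@[x\leftarrow\mathcal{H}]$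 denotes the program context $(t,E[x\leftarrow\mathcal{H}])$. Look-up $P(x)$: $P(x)=t$ if the list of ES of $P$ contains $[x\leftarrow t]$ with $t$ a term, $\bot$ otherwise. $v^{\alpha}$ is a copy of $v$ with fresh bound variables. Needed variables: $nv(x)=\{x\}$, $nv(\lambda x.t)=\emptyset$, $nv(t\,u)=nv(t)\cup nv(u)$; $nv((t,\epsilon))=nv(t)$, $nv((t,E[x\leftarrow u]))=nv((t,E))$ if $x\notin nv((t,E))$, else $(nv((t,E))\setminus\{x\})\cup nv(u)$; $nv(\langle\cdot\rangle)=\emptyset$, $nv(\mathcal{H}\,t)=nv(\mathcal{H})$, $nv(i\,\mathcal{H})=nv(i)\cup nv(\mathcal{H})$. Open evaluation contexts $P\in\mathcal{E}_{{\mathcal{V}}}$, inductively: $(\mathcal{H},\epsilon)\in\mathcal{E}_{nv(\mathcal{H})}$; if $P\in\mathcal{E}_{{\mathcal{V}}}$, $x\in{\mathcal{V}}$, $i$ inert then $P@[x\leftarrow i]\in\mathcal{E}_{({\mathcal{V}}\setminus\{x\})\cup nv(i)}$; if $P\in\mathcal{E}_{{\mathcal{V}}}$, $x\notin{\mathcal{V}}$ then $P@[x\leftarrow t]\in\mathcal{E}_{{\mathcal{V}}}$; if $P\in\mathcal{E}_{{\mathcal{V}}}$, $x\notin{\mathcal{V}}$ then $P\langle x\rangle@[x\leftarrow\mathcal{H}]\in\mathcal{E}_{{\mathcal{V}}\cup nv(\mathcal{H})}$ ($x$ not in the domain of $P$). Open CbNeed rules, for $P\in\mathcal{E}_{{\mathcal{V}}}$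 for some ${\mathcal{V}}$: $P\langle(\lambda x.t)u\rangle \to_{\mathrm{om}} P\langle (t,[x\leftarrow u])\rangle$; $P\langle x\rangle\to_{\mathrm{oe}} P\langle v^{\alpha}\rangle$ if $P(x)=v$; $\to_{\mathrm{ond}} := \to_{\mathrm{om}}\cup\to_{\mathrm{oe}}$. Predicates on programs, inductively: $\mathrm{inert}((i,\epsilon))$ for $i$ inert; if $\mathrm{inert}(p)$ and $x\in nv(p)$ then $\mathrm{inert}(p@[x\leftarrow i])$ for $i$ inert; if $\mathrm{inert}(p)$ and $x\notin nv(p)$ then $\mathrm{inert}(p@[x\leftarrow t])$ for any $t$. $\mathrm{abs}((v,\epsilon))$ for $v$ a value; if $\mathrm{abs}(p)$ then $\mathrm{abs}(p@[x\leftarrow t])$ for any $t$. $\mathrm{onorm}(p)$ iff $\mathrm{inert}(p)$ or $\mathrm{abs}(p)$. *)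

theory Defs
  imports Main
begin

datatype trm = Var nat | Lam nat trm | App trm trm

datatype ctx = Hole | CAppL ctx trm | CAppR trm ctx

text \<open>Environments in presentation order: E[x<-t] is E @ [(x,t)];
  a binder scopes over the main term and over the ES to its left.\<close>
type_synonym env = "(nat \<times> trm) list"
type_synonym prog = "trm \<times> env"

text \<open>Program contexts: (C,E), or (u, E1[x<-C]E2) (i.e. G = E1[x<-C] followed by E2).\<close>
datatype pctx = PCtx ctx env | PEnv trm env nat ctx env

fun fv :: "trm \<Rightarrow> nat set" where
  "fv (Var x) = {x}"
| "fv (Lam x t) = fv t - {x}"
| "fv (App t u) = fv t \<union> fv u"

fun is_value :: "trm \<Rightarrow> bool" where
  "is_value (Lam x t) = True"
| "is_value _ = False"

inductive inert_t :: "trm \<Rightarrow> bool" where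
  "inert_t (Var x)"
| "inert_t i \<Longrightarrow> (is_value f \<or> inert_t f) \<Longrightarrow> inert_t (App i f)"

inductive isH :: "ctx \<Rightarrow> bool" where
  "isH Hole"
| "isH H \<Longrightarrow> isH (CAppL H t)"
| "inert_t i \<Longrightarrow> isH H \<Longrightarrow> isH (CAppR i H)"

fun cplug :: "ctx \<Rightarrow> trm \<Rightarrow> trm" where
  "cplug Hole t = t"
| "cplug (CAppL C u) t = App (cplug C t) u"
| "cplug (CAppR u C) t = App u (cplug C t)"

fun nv_t :: "trm \<Rightarrow> nat set" where
  "nv_t (Var x) = {x}"
| "nv_t (Lam x t) = {}"
| "nv_t (App t u) = nv_t t \<union> nv_t u"

fun nv_c :: "ctx \<Rightarrow> nat set" where
  "nv_c Hole = {}"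
| "nv_c (CAppL C t) = nv_c C"
| "nv_c (CAppR i C) = nv_t i \<union> nv_c C"

fun nvE :: "nat set \<Rightarrow> env \<Rightarrow> nat set" where
  "nvE S [] = S"
| "nvE S ((x,u) # E) = nvE (if x \<notin> S then S else (S - {x}) \<union> nv_t u) E"

definition nvp :: "prog \<Rightarrow> nat set" where
  "nvp p = nvE (nv_t (fst p)) (snd p)"

definition prog_app :: "prog \<Rightarrow> nat \<Rightarrow> trm \<Rightarrow> prog" where
  "prog_app p x u = (fst p, snd p @ [(x, u)])"

fun pctx_app :: "pctx \<Rightarrow> nat \<Rightarrow> trm \<Rightarrow> pctx" where
  "pctx_app (PCtx C E) y s = PCtx C (E @ [(y, s)])"
| "pctx_app (PEnv u E1 x C E2) y s = PEnv u E1 x C (E2 @ [(y, s)])"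

fun pplug :: "pctx \<Rightarrow> prog \<Rightarrow> prog" where
  "pplug (PCtx C E) (t, E') = (cplug C t, E' @ E)"
| "pplug (PEnv u E1 x C E2) (t, E') = (u, E1 @ [(x, cplug C t)] @ E' @ E2)"

text \<open>The ES of P whose content is a term (the ES containing the hole is excluded).\<close>
fun pes :: "pctx \<Rightarrow> env" where
  "pes (PCtx C E) = E"
| "pes (PEnv u E1 x C E2) = E1 @ E2"

fun pdom :: "pctx \<Rightarrow> nat set" where
  "pdom (PCtx C E) = fst ` set E"
| "pdom (PEnv u E1 x C E2) = fst ` set E1 \<union> {x} \<union> fst ` set E2"

inductive evctx :: "pctx \<Rightarrow> nat set \<Rightarrow> bool" where
  "isH H \<Longrightarrow> evctx (PCtx H []) (nv_c H)"
| "evctx P V \<Longrightarrow> x \<in> V \<Longrightarrow> inert_t i \<Longrightarrow> evctx (pctx_app P x i) ((V - {x}) \<union> nv_t i)"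
| "evctx P V \<Longrightarrow> x \<notin> V \<Longrightarrow> evctx (pctx_app P x t) V"
| "evctx P V \<Longrightarrow> x \<notin> V \<Longrightarrow> x \<notin> pdom P \<Longrightarrow> isH H \<Longrightarrow> pplug P (Var x, []) = (u, E)
     \<Longrightarrow> evctx (PEnv u E x H []) (V \<union> nv_c H)"

definition step_om :: "prog \<Rightarrow> prog \<Rightarrow> bool" where
  "step_om p q \<longleftrightarrow> (\<exists>P V x t u. evctx P V \<and> p = pplug P (App (Lam x t) u, [])
                                  \<and> q = pplug P (t, [(x, u)]))"

text \<open>The alpha-copy v^alpha is alpha-equivalent to v; we use v itself (only the existence of
  a step matters for normal forms).\<close>
definition step_oe :: "prog \<Rightarrow> prog \<Rightarrow> bool" where
  "step_oe p q \<longleftrightarrow> (\<exists>P V x v. evctx P V \<and> (x, v) \<in> set (pes P) \<and> is_value v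
                                \<and> p = pplug P (Var x, []) \<and> q = pplug P (v, []))"

definition step_ond :: "prog \<Rightarrow> prog \<Rightarrow> bool" where
  "step_ond p q \<longleftrightarrow> step_om p q \<or> step_oe p q"

inductive inert_p :: "prog \<Rightarrow> bool" where
  "inert_t i \<Longrightarrow> inert_p (i, [])"
| "inert_p p \<Longrightarrow> x \<in> nvp p \<Longrightarrow> inert_t i \<Longrightarrow> inert_p (prog_app p x i)"
| "inert_p p \<Longrightarrow> x \<notin> nvp p \<Longrightarrow> inert_p (prog_app p x t)"

inductive abs_p :: "prog \<Rightarrow> bool" where
  "is_value v \<Longrightarrow> abs_p (v, [])"
| "abs_p p \<Longrightarrow> abs_p (prog_app p x t)"

definition onorm :: "prog \<Rightarrow> bool" where
  "onorm p \<longleftrightarrow> inert_p p \<or> abs_p p"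

text \<open>ES binders are pairwise distinct, and no binder name occurs free in a position outside
  its scope (the ES itself or any ES to its right).  Every program is alpha-equivalent to one
  satisfying this.\<close>
definition well_named :: "prog \<Rightarrow> bool" where
  "well_named p \<longleftrightarrow> distinct (map fst (snd p)) \<and>
     (\<forall>i j. i \<le> j \<and> j < length (snd p) \<longrightarrow> fst (snd p ! i) \<notin> fv (snd (snd p ! j)))"

end

theory Submission
  imports Defs
begin

(* Appending [y<-u] to a program that is
   normal or has a step can only block progress when y is needed and u is not inert.  Then
   the leftmost needed occurrence of y is the hole of an open evaluation context in E_V with
   y not in V, and u is either a value, giving an exponential step at y, or has a
   multiplicative redex in an H context, giving a step inside the ES via the last rule of
   E_V.  Conversely, in an inert program the hole of an open evaluation context holds a
   fireball, and every ES needed by that hole holds an inert term, hence no value: so neither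
   rule applies.  Well-namedness ensures that a variable of the hole is never bound by an ES
   to the left of the ES containing the hole. *)

definition fireball :: "trm \<Rightarrow> bool" where
  "fireball f \<longleftrightarrow> is_value f \<or> inert_t f"

lemma value_not_inert: "is_value v \<Longrightarrow> \<not> inert_t v"
  by (cases v) (auto elim: inert_t.cases)

lemma fireball_cplug: "fireball (cplug C s) \<Longrightarrow> fireball s"
proof (induction C)
  case (CAppR t C)
  then have "is_value (cplug C s) \<or> inert_t (cplug C s)"
    by (auto simp: fireball_def elim: inert_t.cases)
  then show ?case
    using CAppR.IH by (cases C) (auto simp: fireball_def)
qed (auto simp: fireball_def elim: inert_t.cases)

lemma fireball_or_redex:
  "fireball t \<or> (\<exists>H x b a. isH H \<and> t = cplug H (App (Lam x b) a))"
proof (induction t)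
  case (App t1 t2)
  show ?case
  proof (cases t1)
    case (Lam x b)
    then show ?thesis by (metis cplug.simps(1) isH.intros(1))
  next
    case Var
    then have "inert_t t1" by (simp add: inert_t.intros(1))
    then show ?thesis
      using App.IH(2) by (metis fireball_def cplug.simps(3) inert_t.intros(2) isH.intros(3))
  next
    case App
    then have "\<not> is_value t1" by simp
    then show ?thesis
      using App.IH by (metis fireball_def cplug.simps(2,3) inert_t.intros(2) isH.intros(2,3))
  qed
qed (auto simp: fireball_def intro: inert_t.intros)

lemma nv_t_subset_fv: "nv_t t \<subseteq> fv t"
  by (induction t) auto

lemma nv_t_cplug: "nv_t s \<subseteq> nv_t (cplug C s)"
  by (induction C) auto

lemma fv_cplug: "fv s \<subseteq> fv (cplug C s)"
  by (induction C) auto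

lemma inert_t_leftmost_needed:
  assumes "inert_t i" "x \<in> nv_t i"
  shows "\<exists>H. isH H \<and> cplug H (Var x) = i \<and> x \<notin> nv_c H \<and> nv_c H \<subseteq> nv_t i"
  using assms
proof (induction rule: inert_t.induct)
  case (1 y)
  then show ?case by (intro exI[of _ Hole]) (auto intro: isH.intros)
next
  case (2 i f)
  show ?case
  proof (cases "x \<in> nv_t i")
    case True
    with "2.IH"(1) obtain H where "isH H" "cplug H (Var x) = i" "x \<notin> nv_c H" "nv_c H \<subseteq> nv_t i"
      by blast
    then show ?thesis by (intro exI[of _ "CAppL H f"]) (auto intro: isH.intros)
  next
    case False
    with "2.prems" have "x \<in> nv_t f" by simp
    then have "\<not> is_value f" by (cases f) auto
    with "2" \<open>x \<in> nv_t f\<close> obtain H where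
      "isH H" "cplug H (Var x) = f" "x \<notin> nv_c H" "nv_c H \<subseteq> nv_t f"
      by blast
    then show ?thesis
      using False "2" by (intro exI[of _ "CAppR i H"]) (auto intro: isH.intros)
  qed
qed

lemma isH_leftmost_needed:
  assumes "isH H" "x \<in> nv_c H"
  shows "\<exists>H'. isH H' \<and> cplug H' (Var x) = cplug H s \<and> x \<notin> nv_c H' \<and> nv_c H' \<subseteq> nv_c H"
  using assms
proof (induction rule: isH.induct)
  case (2 H t)
  then obtain H' where "isH H'" "cplug H' (Var x) = cplug H s" "x \<notin> nv_c H'" "nv_c H' \<subseteq> nv_c H"
    by auto
  then show ?case by (intro exI[of _ "CAppL H' t"]) (auto intro: isH.intros)
next
  case (3 i H)
  show ?case
  proof (cases "x \<in> nv_t i")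
    case True
    with \<open>inert_t i\<close> obtain H' where "isH H'" "cplug H' (Var x) = i" "x \<notin> nv_c H'" "nv_c H' \<subseteq> nv_t i"
      using inert_t_leftmost_needed by blast
    then show ?thesis by (intro exI[of _ "CAppL H' (cplug H s)"]) (auto intro: isH.intros)
  next
    case False
    with "3.IH" "3.prems" obtain H' where
      "isH H'" "cplug H' (Var x) = cplug H s" "x \<notin> nv_c H'" "nv_c H' \<subseteq> nv_c H"
      by auto
    then show ?thesis
      using False \<open>inert_t i\<close> by (intro exI[of _ "CAppR i H'"]) (auto intro: isH.intros)
  qed
qed simp

lemma nvp_prog_app:
  "nvp (prog_app p y u) = (if y \<in> nvp p then (nvp p - {y}) \<union> nv_t u else nvp p)"
proof -
  have "nvE S (E @ [(y, u)]) = (if y \<in> nvE S E then (nvE S E - {y}) \<union> nv_t u else nvE S E)"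
    for S E by (induction E arbitrary: S) auto
  then show ?thesis by (simp add: nvp_def prog_app_def)
qed

lemma pplug_pctx_app: "pplug (pctx_app P y u) (s, []) = prog_app (pplug P (s, [])) y u"
  by (cases P) (auto simp: prog_app_def)

lemma pdom_pplug: "pdom P = fst ` set (snd (pplug P (s, [])))"
  by (cases P) auto

lemma pdom_pctx_app: "pdom (pctx_app P y u) = insert y (pdom P)"
  by (cases P) auto

lemma pes_pctx_app: "pes (pctx_app P y u) = pes P @ [(y, u)]"
  by (cases P) auto

lemma prog_app_neq_Nil: "prog_app p y u \<noteq> (t, [])"
  by (simp add: prog_app_def)

lemma prog_app_inject: "prog_app p y u = prog_app p' y' u' \<longleftrightarrow> p = p' \<and> y = y' \<and> u = u'"
  by (cases p, cases p') (auto simp: prog_app_def)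

lemma inert_p_Nil_iff: "inert_p (t, []) \<longleftrightarrow> inert_t t"
  by (auto simp: prog_app_neq_Nil[symmetric] elim: inert_p.cases intro: inert_p.intros)

lemma inert_p_prog_app_iff:
  "inert_p (prog_app p y u) \<longleftrightarrow> inert_p p \<and> (y \<in> nvp p \<longrightarrow> inert_t u)"
proof
  assume "inert_p (prog_app p y u)"
  then show "inert_p p \<and> (y \<in> nvp p \<longrightarrow> inert_t u)"
    by (cases rule: inert_p.cases) (auto simp: prog_app_inject prog_app_neq_Nil)
qed (auto intro: inert_p.intros)

lemma abs_p_iff: "abs_p p \<longleftrightarrow> is_value (fst p)"
proof
  show "abs_p p \<Longrightarrow> is_value (fst p)"
    by (induction rule: abs_p.induct) (simp_all add: prog_app_def)
next
  assume "is_value (fst p)"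
  then have "abs_p (fst p, E)" for E
  proof (induction E rule: rev_induct)
    case (snoc e E)
    then show ?case using abs_p.intros(2)[of "(fst p, E)" "fst e" "snd e"]
      by (simp add: prog_app_def)
  qed (rule abs_p.intros(1))
  then show "abs_p p" by (metis prod.collapse)
qed

lemma well_named_prog_appD:
  assumes "well_named (prog_app p y u)"
  shows "well_named p" and "y \<notin> fst ` set (snd p)"
proof -
  let ?E = "snd p @ [(y, u)]"
  have "fst (snd p ! i) \<notin> fv (snd (snd p ! j))" if "i \<le> j" "j < length (snd p)" for i j
  proof -
    have "fst (?E ! i) \<notin> fv (snd (?E ! j))"
      using assms that by (simp add: well_named_def prog_app_def)
    with that show ?thesis by (simp add: nth_append)
  qed
  with assms show "well_named p"
    by (simp add: well_named_def prog_app_def)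
  from assms show "y \<notin> fst ` set (snd p)"
    by (simp add: well_named_def prog_app_def)
qed

lemma finite_pdom: "finite (pdom P)"
  by (cases P) auto

(* Evaluation of p reaches the occurrence of x at the hole of some P in E_V before x itself is
   needed; W bounds the variables needed on the way. *)
definition first_needed :: "nat \<Rightarrow> nat set \<Rightarrow> prog \<Rightarrow> bool" where
  "first_needed x W p \<longleftrightarrow> (\<exists>P V. evctx P V \<and> x \<notin> V \<and> V \<subseteq> W \<and> pplug P (Var x, []) = p)"

lemma first_needed_mono: "first_needed x W p \<Longrightarrow> W \<subseteq> W' \<Longrightarrow> first_needed x W' p"
  unfolding first_needed_def by blast

lemma first_needed_prog_app_fresh:
  "first_needed x W p \<Longrightarrow> y \<notin> W \<Longrightarrow> first_needed x W (prog_app p y t)"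
  unfolding first_needed_def by (metis evctx.intros(3) pplug_pctx_app subsetD)

lemma first_needed_prog_app_inert:
  assumes "first_needed x W p" "inert_t i" "x \<notin> nv_t i"
  shows "first_needed x ((W - {y}) \<union> nv_t i) (prog_app p y i)"
proof -
  obtain P V where P: "evctx P V" "x \<notin> V" "V \<subseteq> W" "pplug P (Var x, []) = p"
    using assms(1) first_needed_def by blast
  have "evctx (pctx_app P y i) (if y \<in> V then (V - {y}) \<union> nv_t i else V)"
    using P(1) assms(2) by (auto intro: evctx.intros(2,3))
  with P assms(3) show ?thesis
    unfolding first_needed_def
    by (intro exI[of _ "pctx_app P y i"] exI[of _ "if y \<in> V then (V - {y}) \<union> nv_t i else V"])
      (auto simp: pplug_pctx_app)
qed

lemma first_needed_prog_app_hole: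
  assumes "first_needed y W p" "y \<notin> fst ` set (snd p)" "isH H" "x \<notin> W \<union> nv_c H"
  shows "first_needed x (W \<union> nv_c H) (prog_app p y (cplug H (Var x)))"
proof -
  obtain P V where P: "evctx P V" "y \<notin> V" "V \<subseteq> W" "pplug P (Var y, []) = p"
    using assms(1) first_needed_def by blast
  obtain t E where p: "p = (t, E)" by (cases p)
  have "evctx (PEnv t E y H []) (V \<union> nv_c H)"
    using evctx.intros(4)[OF P(1,2) _ assms(3)] P(4) assms(2) pdom_pplug[of P "Var y"] p by simp
  with P(3) assms(4) p show ?thesis
    unfolding first_needed_def
    by (intro exI[of _ "PEnv t E y H []"] exI[of _ "V \<union> nv_c H"]) (auto simp: prog_app_def)
qed

lemma first_needed_prog_app_needed:
  assumes "first_needed y W p" "y \<notin> fst ` set (snd p)" "inert_t i" "x \<in> nv_t i"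
    and first_needed_ctx:
      "\<And>P V. evctx P V \<Longrightarrow> pplug P (Var y, []) = p \<Longrightarrow> x \<in> V \<Longrightarrow> first_needed x V p"
  shows "first_needed x ((W - {y}) \<union> nv_t i) (prog_app p y i)"
proof -
  obtain P V where P: "evctx P V" "y \<notin> V" "V \<subseteq> W" "pplug P (Var y, []) = p"
    using assms(1) first_needed_def by blast
  show ?thesis
  proof (cases "x \<in> V")
    case True
    then have "first_needed x V (prog_app p y i)"
      using first_needed_ctx[OF P(1,4)] P(2) first_needed_prog_app_fresh by blast
    then show ?thesis
      by (rule first_needed_mono) (use P(2,3) in blast)
  next
    case False
    obtain H where H: "isH H" "cplug H (Var x) = i" "x \<notin> nv_c H" "nv_c H \<subseteq> nv_t i"
      using inert_t_leftmost_needed assms(3,4) by blast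
    have "first_needed y V p"
      using P unfolding first_needed_def by blast
    then have "first_needed x (V \<union> nv_c H) (prog_app p y i)"
      using first_needed_prog_app_hole[OF _ assms(2) H(1)] H(2,3) False by blast
    then show ?thesis
      by (rule first_needed_mono) (use P(2,3) H(4) in blast)
  qed
qed

lemma first_needed_PCtx:
  assumes "isH H" "x \<in> nv_c H"
  shows "first_needed x (nv_c H) (cplug H s, [])"
proof -
  obtain H' where "isH H'" "cplug H' (Var x) = cplug H s" "x \<notin> nv_c H'" "nv_c H' \<subseteq> nv_c H"
    using isH_leftmost_needed assms by blast
  then show ?thesis
    unfolding first_needed_def
    by (intro exI[of _ "PCtx H' []"] exI[of _ "nv_c H'"]) (auto intro: evctx.intros(1))
qed

lemma first_needed_PEnv:
  assumes "evctx Q W" "y \<notin> W" "y \<notin> pdom Q" "pplug Q (Var y, []) = (u, E)"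
    and "isH H" "x \<in> nv_c H" "x \<notin> W"
  shows "first_needed x (W \<union> nv_c H) (u, E @ [(y, cplug H s)])"
proof -
  obtain H' where H': "isH H'" "cplug H' (Var x) = cplug H s" "x \<notin> nv_c H'"
      "nv_c H' \<subseteq> nv_c H"
    using isH_leftmost_needed assms(5,6) by blast
  have "first_needed y W (u, E)"
    using assms(1,2,4) unfolding first_needed_def by blast
  then have "first_needed x (W \<union> nv_c H') (prog_app (u, E) y (cplug H' (Var x)))"
    using first_needed_prog_app_hole[OF _ _ H'(1)] assms(3,4,7) H'(3)
      pdom_pplug[of Q "Var y"] by simp
  then have "first_needed x (W \<union> nv_c H') (u, E @ [(y, cplug H s)])"
    using H'(2) by (simp add: prog_app_def)
  then show ?thesis
    by (rule first_needed_mono) (use H'(4) in auto)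
qed

lemma distinct_pplug_pctx_appD:
  assumes "distinct (map fst (snd (pplug (pctx_app Q y t) (s, []))))"
  shows "distinct (map fst (snd (pplug Q (s, []))))" and "y \<notin> pdom Q"
    and "card (pdom Q) < card (pdom (pctx_app Q y t))"
proof -
  show "distinct (map fst (snd (pplug Q (s, []))))" and y_Q: "y \<notin> pdom Q"
    using assms by (auto simp: pplug_pctx_app prog_app_def pdom_pplug[of Q s])
  then show "card (pdom Q) < card (pdom (pctx_app Q y t))"
    by (simp add: pdom_pctx_app finite_pdom)
qed

lemma evctx_leftmost_needed:
  assumes "evctx P V" "x \<in> V" "x \<notin> pdom P" "distinct (map fst (snd (pplug P (s, []))))"
  shows "first_needed x V (pplug P (s, []))"
  using assms
  \<comment> \<open>Not a rule induction: when x is needed through an ES [y<-i], the search for x restarts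
    from the context found for y.\<close>
proof (induction "card (pdom P)" arbitrary: P V x s rule: less_induct)
  case less
  have IH: "first_needed x' W (pplug Q (s', []))"
    if "card (pdom Q) < card (pdom P)" "evctx Q W" "x' \<in> W" "x' \<notin> pdom Q"
      "distinct (map fst (snd (pplug Q (s', []))))" for Q W x' s'
    using less.hyps that by blast
  from less.prems(1) show ?case
  proof cases
    case (1 H)
    then show ?thesis
      using first_needed_PCtx less.prems(2) by simp
  next
    case (2 Q W y i)
    note Q = distinct_pplug_pctx_appD[OF less.prems(4)[unfolded 2(1)]]
    have x_Q: "x \<notin> pdom Q"
      using less.prems(3) 2(1) by (simp add: pdom_pctx_app)
    show ?thesis
    proof (cases "x \<in> nv_t i")
      case True
      have "first_needed x V' (pplug Q (s, []))"
        if "evctx Q' V'" "pplug Q' (Var y, []) = pplug Q (s, [])" "x \<in> V'" for Q' V'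
        using IH[OF _ that(1,3), of "Var y"] that(2) Q 2(1) x_Q
          pdom_pplug[of Q' "Var y"] pdom_pplug[of Q s] by simp
      then show ?thesis
        using first_needed_prog_app_needed[OF IH[OF _ 2(3,4)] _ 2(5) True] Q 2(1,2)
          pdom_pplug[of Q s] by (simp add: pplug_pctx_app)
    next
      case False
      with less.prems(2) 2(2) have "x \<in> W" by simp
      then show ?thesis
        using first_needed_prog_app_inert[OF IH[OF _ 2(3) _ x_Q] 2(5) False] Q 2(1,2)
        by (simp add: pplug_pctx_app)
    qed
  next
    case (3 Q y t)
    note Q = distinct_pplug_pctx_appD[OF less.prems(4)[unfolded 3(1)]]
    have "x \<notin> pdom Q"
      using less.prems(3) 3(1) by (simp add: pdom_pctx_app)
    then show ?thesis
      using first_needed_prog_app_fresh[OF IH[OF _ 3(2) less.prems(2)] 3(3)] Q 3(1)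
      by (simp add: pplug_pctx_app)
  next
    case (4 Q W y H u E)
    show ?thesis
    proof (cases "x \<in> W")
      case True
      have "card (pdom Q) < card (pdom P)" "x \<notin> pdom Q"
          "distinct (map fst (snd (pplug Q (Var y, []))))"
        using 4(1,5,7) less.prems(3,4) pdom_pplug[of Q "Var y"] by (simp_all add: finite_pdom)
      then have "first_needed x W (pplug Q (Var y, []))"
        by (intro IH[OF _ 4(3) True])
      then have "first_needed x W (u, E @ [(y, cplug H s)])"
        using first_needed_prog_app_fresh[of x W "(u, E)" y] 4(4,7) by (simp add: prog_app_def)
      then show ?thesis
        using first_needed_mono[of x W _ V] 4(1,2) by simp
    next
      case False
      with less.prems(2) 4(2) have "x \<in> nv_c H" by simp
      then show ?thesis
        using first_needed_PEnv[OF 4(3,4,5,7,6)] False 4(1,2) by simp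
    qed
  qed
qed

lemma inert_p_leftmost_needed:
  assumes "inert_p p" "x \<in> nvp p" "x \<notin> fst ` set (snd p)" "distinct (map fst (snd p))"
  shows "first_needed x (nvp p) p"
  using assms
proof (induction arbitrary: x rule: inert_p.induct)
  case (1 i)
  then have "x \<in> nv_t i" by (simp add: nvp_def)
  then obtain H where "isH H" "cplug H (Var x) = i" "x \<notin> nv_c H" "nv_c H \<subseteq> nv_t i"
    using inert_t_leftmost_needed "1.hyps" by blast
  then show ?case
    unfolding first_needed_def
    by (intro exI[of _ "PCtx H []"] exI[of _ "nv_c H"]) (auto simp: nvp_def intro: evctx.intros(1))
next
  case (2 p y i)
  have prems_p: "x \<notin> fst ` set (snd p)" "y \<notin> fst ` set (snd p)" "distinct (map fst (snd p))"
    using "2.prems"(2,3) by (auto simp: prog_app_def)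
  have nvp_app: "nvp (prog_app p y i) = (nvp p - {y}) \<union> nv_t i"
    using "2.hyps"(2) by (simp add: nvp_prog_app)
  show ?case
  proof (cases "x \<in> nv_t i")
    case True
    have "first_needed x V p" if "evctx P V" "pplug P (Var y, []) = p" "x \<in> V" for P V
      using evctx_leftmost_needed[OF that(1,3), of "Var y"] that(2) prems_p(1,3)
        pdom_pplug[of P "Var y"] by simp
    then show ?thesis
      using first_needed_prog_app_needed[OF "2.IH" prems_p(2) "2.hyps"(3) True]
        "2.hyps"(2) prems_p(2,3) nvp_app by simp
  next
    case False
    with "2.prems"(1) nvp_app have "x \<in> nvp p" by simp
    then show ?thesis
      using first_needed_prog_app_inert[OF "2.IH" "2.hyps"(3) False] prems_p(1,3) nvp_app by simp
  qed
next
  case (3 p y t)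
  have "x \<in> nvp p"
    using "3.prems"(1) "3.hyps"(2) by (simp add: nvp_prog_app)
  moreover have "x \<notin> fst ` set (snd p)" "distinct (map fst (snd p))"
    using "3.prems"(2,3) by (auto simp: prog_app_def)
  ultimately show ?case
    using first_needed_prog_app_fresh[OF "3.IH" "3.hyps"(2)] "3.hyps"(2)
    by (simp add: nvp_prog_app)
qed

lemma evctx_needed_survives:
  "evctx P V \<Longrightarrow> z \<in> nv_t s \<Longrightarrow> z \<notin> pdom P \<Longrightarrow> z \<in> nvp (pplug P (s, []))"
proof (induction arbitrary: s z rule: evctx.induct)
  case (1 H)
  then show ?case using nv_t_cplug by (auto simp: nvp_def)
next
  case (4 P V y H u E)
  have "y \<in> nvp (u, E)"
    using "4.IH"[of y "Var y"] "4.hyps"(3,5) by simp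
  moreover have "z \<in> nv_t (cplug H s)" "z \<noteq> y" "z \<notin> pdom P"
    using "4.prems" nv_t_cplug pdom_pplug[of P "Var y"] "4.hyps"(5) by auto
  ultimately show ?case
    by (simp add: nvp_prog_app flip: prog_app_def[of "(u, E)", simplified])
qed (auto simp: pplug_pctx_app nvp_prog_app pdom_pctx_app)

lemma evctx_value_fst:
  "evctx P V \<Longrightarrow> is_value (fst (pplug P (s, []))) \<Longrightarrow> is_value s"
proof (induction arbitrary: s rule: evctx.induct)
  case (1 H)
  then show ?case by (cases H) auto
next
  case (4 P V x H u E)
  then show ?case by (metis fst_conv is_value.simps(2) pplug.simps(2))
qed (simp_all add: pplug_pctx_app prog_app_def)

lemma inert_p_hole_fireball:
  "evctx P V \<Longrightarrow> inert_p (pplug P (s, [])) \<Longrightarrow> fireball s"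
proof (induction rule: evctx.induct)
  case (1 H)
  then show ?case
    using fireball_cplug[of H s] by (simp add: inert_p_Nil_iff fireball_def)
next
  case (4 P V y H u E)
  have "y \<in> nvp (u, E)"
    using evctx_needed_survives[of P V y "Var y"] "4.hyps"(1,3,5) by simp
  moreover have "inert_p (prog_app (u, E) y (cplug H s))"
    using "4.prems" by (simp add: prog_app_def)
  ultimately show ?case
    using fireball_cplug[of H s] by (simp add: inert_p_prog_app_iff fireball_def)
qed (simp_all add: pplug_pctx_app inert_p_prog_app_iff)

lemma inert_p_needed_es_inert:
  assumes "evctx P V" "well_named (pplug P (s, []))" "inert_p (pplug P (s, []))"
    "z \<in> nv_t s" "(z, w) \<in> set (pes P)"
  shows "inert_t w"
  using assms
proof (induction rule: evctx.induct)
  case (1 H)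
  then show ?case by simp
next
  case (2 P V y i)
  then show ?case
    using evctx_needed_survives[of P V z s] well_named_prog_appD[of "pplug P (s, [])" y i]
    by (auto simp: pplug_pctx_app pes_pctx_app inert_p_prog_app_iff pdom_pplug[of P s])
next
  case (3 P V y t)
  then show ?case
    using evctx_needed_survives[of P V z s] well_named_prog_appD[of "pplug P (s, [])" y t]
    by (auto simp: pplug_pctx_app pes_pctx_app inert_p_prog_app_iff pdom_pplug[of P s])
next
  case (4 P V y H u E)
  \<comment> \<open>z would occur free in the ES [y<-H<s>] although bound to its left.\<close>
  obtain k where k: "k < length E" "E ! k = (z, w)"
    using "4.prems"(4) by (auto simp: in_set_conv_nth)
  have "z \<in> fv (cplug H s)"
    using "4.prems"(3) nv_t_subset_fv fv_cplug by blast
  moreover have "fst ((E @ [(y, cplug H s)]) ! i) \<notin> fv (snd ((E @ [(y, cplug H s)]) ! j))"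
    if "i \<le> j" "j \<le> length E" for i j
    using "4.prems"(1) that by (simp add: well_named_def)
  ultimately show ?case
    using k by (metis less_imp_le_nat nth_append_left nth_append_length order.refl fst_conv snd_conv)
qed

definition ond_redex :: "pctx \<Rightarrow> trm \<Rightarrow> bool" where
  "ond_redex P s \<longleftrightarrow> (\<exists>x t u. s = App (Lam x t) u)
     \<or> (\<exists>x v. s = Var x \<and> (x, v) \<in> set (pes P) \<and> is_value v)"

lemma ex_step_ond_iff:
  "(\<exists>q. step_ond p q) \<longleftrightarrow> (\<exists>P V s. evctx P V \<and> ond_redex P s \<and> p = pplug P (s, []))"
  unfolding step_ond_def step_om_def step_oe_def ond_redex_def by blast

lemma step_ond_prog_app_needed:
  assumes "first_needed y W p" "y \<notin> fst ` set (snd p)" "\<not> inert_t u"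
  shows "\<exists>q. step_ond (prog_app p y u) q"
proof -
  obtain P V where P: "evctx P V" "y \<notin> V" "pplug P (Var y, []) = p"
    using assms(1) first_needed_def by blast
  obtain t E where p: "p = (t, E)" by (cases p)
  from fireball_or_redex[of u] assms(3) consider "is_value u"
    | H x b a where "isH H" "u = cplug H (App (Lam x b) a)"
    unfolding fireball_def by blast
  then show ?thesis
  proof cases
    case 1
    have "evctx (pctx_app P y u) V" "ond_redex (pctx_app P y u) (Var y)"
      using P(1,2) 1 by (auto simp: ond_redex_def pes_pctx_app intro: evctx.intros(3))
    then show ?thesis
      unfolding ex_step_ond_iff by (metis P(3) pplug_pctx_app)
  next
    case (2 H x b a)
    have "evctx (PEnv t E y H []) (V \<union> nv_c H)"
      using evctx.intros(4)[OF P(1,2) _ 2(1)] P(3) assms(2) pdom_pplug[of P "Var y"] p by simp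
    moreover have "prog_app p y u = pplug (PEnv t E y H []) (App (Lam x b) a, [])"
      using 2(2) p by (simp add: prog_app_def)
    ultimately show ?thesis
      unfolding ex_step_ond_iff ond_redex_def by blast
  qed
qed

lemma step_ond_prog_app:
  assumes "\<exists>q. step_ond p q" "y \<notin> fst ` set (snd p)" "distinct (map fst (snd p))"
  shows "\<exists>q. step_ond (prog_app p y u) q"
proof -
  obtain P V s where P: "evctx P V" "ond_redex P s" "pplug P (s, []) = p"
    using assms(1) unfolding ex_step_ond_iff by metis
  show ?thesis
  proof (cases "y \<in> V \<and> \<not> inert_t u")
    case True
    then have "first_needed y V p"
      using evctx_leftmost_needed[OF P(1), of y s] assms(2,3) P(3) pdom_pplug[of P s] by simp
    then show ?thesis
      using step_ond_prog_app_needed assms(2) True by blast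
  next
    case False
    then have "\<exists>V'. evctx (pctx_app P y u) V'"
      using P(1) by (blast intro: evctx.intros(2,3))
    moreover have "ond_redex (pctx_app P y u) s"
      using P(2) by (auto simp: ond_redex_def pes_pctx_app)
    ultimately show ?thesis
      unfolding ex_step_ond_iff by (metis P(3) pplug_pctx_app)
  qed
qed

lemma onorm_prog_app_or_step:
  assumes "onorm p" "y \<notin> fst ` set (snd p)" "distinct (map fst (snd p))"
  shows "onorm (prog_app p y u) \<or> (\<exists>q. step_ond (prog_app p y u) q)"
proof (cases "abs_p p")
  case True
  then show ?thesis
    unfolding onorm_def by (blast intro: abs_p.intros(2))
next
  case False
  with assms(1) have inert: "inert_p p"
    by (simp add: onorm_def)
  show ?thesis
  proof (cases "y \<in> nvp p \<and> \<not> inert_t u")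
    case True
    then have "first_needed y (nvp p) p"
      using inert_p_leftmost_needed[OF inert] assms(2,3) by blast
    then show ?thesis
      using step_ond_prog_app_needed assms(2) True by blast
  next
    case False
    with inert show ?thesis
      unfolding onorm_def by (auto simp: inert_p_prog_app_iff)
  qed
qed

lemma onorm_or_step:
  assumes "distinct (map fst E)"
  shows "onorm (t, E) \<or> (\<exists>q. step_ond (t, E) q)"
  using assms
proof (induction E rule: rev_induct)
  case Nil
  from fireball_or_redex[of t] show ?case
  proof (elim disjE exE conjE)
    assume "fireball t"
    then show ?thesis
      by (auto simp: fireball_def onorm_def abs_p_iff inert_p_Nil_iff)
  next
    fix H x b a
    assume "isH H" "t = cplug H (App (Lam x b) a)"
    then have "evctx (PCtx H []) (nv_c H)" "ond_redex (PCtx H []) (App (Lam x b) a)"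
        "(t, []) = pplug (PCtx H []) (App (Lam x b) a, [])"
      by (auto simp: ond_redex_def intro: evctx.intros(1))
    then show ?thesis
      unfolding ex_step_ond_iff by blast
  qed
next
  case (snoc e E)
  have tE: "(t, E @ [e]) = prog_app (t, E) (fst e) (snd e)"
    by (simp add: prog_app_def)
  have e_E: "fst e \<notin> fst ` set (snd (t, E))" and dist_E: "distinct (map fst (snd (t, E)))"
    using snoc.prems by auto
  from snoc.IH dist_E have "onorm (t, E) \<or> (\<exists>q. step_ond (t, E) q)"
    by simp
  then show ?case
    unfolding tE
    using onorm_prog_app_or_step[OF _ e_E dist_E] step_ond_prog_app[OF _ e_E dist_E] by blast
qed

lemma onorm_no_step:
  assumes "well_named p" "onorm p"
  shows "\<not> step_ond p q"
proof
  assume "step_ond p q"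
  then obtain P V s where P: "evctx P V" "ond_redex P s" "p = pplug P (s, [])"
    using ex_step_ond_iff by blast
  then have "\<not> is_value s"
    by (auto simp: ond_redex_def)
  then have "\<not> abs_p p"
    using evctx_value_fst[OF P(1), of s] P(3) abs_p_iff by blast
  with assms(2) have inert: "inert_p p"
    by (simp add: onorm_def)
  then have "fireball s"
    using inert_p_hole_fireball P(1,3) by blast
  with P(2) obtain x v where "s = Var x" "(x, v) \<in> set (pes P)" "is_value v"
    by (auto simp: ond_redex_def fireball_def elim: inert_t.cases)
  with P(1,3) assms(1) inert have "inert_t v"
    using inert_p_needed_es_inert by fastforce
  with \<open>is_value v\<close> show False
    using value_not_inert by blast
qed

theorem mainTheorem3:
  fixes p :: prog
  assumes "well_named p"
  shows "(\<not> (\<exists>q. step_ond p q)) \<longleftrightarrow> onorm p"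
proof -
  obtain t E where p: "p = (t, E)" by (cases p)
  with assms have "distinct (map fst E)"
    by (simp add: well_named_def)
  then show ?thesis
    using onorm_or_step onorm_no_step assms p by blast
qed

end
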